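(* Assume hypotheses (A) and (B) and that $p_{ij}=p<1/(d-1)$ for all $i\ne j$. Let $q=p/(1-(d-2)p)$. Let $\gamma=(\gamma_1,\dots,\gamma_d)$ satisfy $0<\gamma_i<\mu_i/\nu_i-1$ for all $i$ and $$\sum_{j=1}^d\frac{\max_{1\le i\le d}\log(1+q\gamma_i)-\log(1+q\gamma_j)}{\log(1+\gamma_j)-\log(1+q\gamma_j)}<1.$$ Then the function $h_\gamma(x)=\sum_{i=1}^d(1+\gamma_i)^{x^i}(1+q\gamma_i)^{\sum_{j\ne i}x^j}$ satisfies $$\limsup_{|x|\to\infty}\frac{\mathcal{L}h_\gamma(x)}{h_\gamma(x)}=-\Bigl(1-\frac{(d-1)p^2}{1-(d-2)p}\Bigr)\min_{1\le i\le d}\gamma_i\Bigl(\frac{\mu_i}{1+\gamma_i}-\nu_i\Bigr)<0.$$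
   Context: Jackson network with $d$ queues: arrival rates $\lambda_i\ge0$, service rates $\mu_i>0$, routing matrix $P=(p_{ij})_{i,j=1}^d$ nonnegative with $p_{ii}=0$, $\sum_jp_{ij}\le1$, $p_{i0}=1-\sum_jp_{ij}$. With $\epsilon^i$ the unit vectors, $q(\epsilon^i)=\lambda_i$, $q(-\epsilon^i)=\mu_ip_{i0}$, $q(\epsilon^j-\epsilon^i)=\mu_ip_{ij}$, zero otherwise (this jump kernel, not the scalar $q$ of the claim); the process on $\mathbb{Z}_+^d$ has generator $\mathcal{L}f(y)=\sum_{z\in\mathbb{Z}_+^d}q(z-y)(f(z)-f(y))$. Hypothesis (A): this kernel is irreducible on $\mathbb{Z}^d$ (equivalently spectral radius of $P$ $<1$ and for every $i$ some $\lambda_jp^{(n)}_{ji}>0$); then the traffic equations $\nu_j=\lambda_j+\sum_i\nu_ip_{ij}$ have a unique solution with $\nu_i>0$. Hypothesis (B): $\nu_i<\mu_i$ for all $i$. *)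

theory Defs
  imports "HOL-Analysis.Analysis"
begin

text \<open>Queues are indexed by a finite type 'd with d = CARD('d).
  States of the network are elements of Z_+^d, i.e. functions 'd => nat;
  jumps live in Z^d, i.e. functions 'd => int.\<close>

definition unit_vec :: "'d \<Rightarrow> ('d \<Rightarrow> int)" where
  "unit_vec i = (\<lambda>k. if k = i then 1 else 0)"

definition exit_prob :: "('d::finite \<Rightarrow> 'd \<Rightarrow> real) \<Rightarrow> 'd \<Rightarrow> real" where
  "exit_prob P i = 1 - (\<Sum>j\<in>UNIV. P i j)"

definition jackson_kernel ::
  "('d::finite \<Rightarrow> real) \<Rightarrow> ('d \<Rightarrow> real) \<Rightarrow> ('d \<Rightarrow> 'd \<Rightarrow> real) \<Rightarrow> ('d \<Rightarrow> int) \<Rightarrow> real" where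
  "jackson_kernel lam mu P z =
     (\<Sum>i\<in>UNIV. (if z = unit_vec i then lam i else 0)
              + (if z = - unit_vec i then mu i * exit_prob P i else 0)
              + (\<Sum>j\<in>UNIV. if j \<noteq> i \<and> z = unit_vec j - unit_vec i then mu i * P i j else 0))"

definition jackson_gen ::
  "('d::finite \<Rightarrow> real) \<Rightarrow> ('d \<Rightarrow> real) \<Rightarrow> ('d \<Rightarrow> 'd \<Rightarrow> real)
     \<Rightarrow> (('d \<Rightarrow> nat) \<Rightarrow> real) \<Rightarrow> ('d \<Rightarrow> nat) \<Rightarrow> real" where
  "jackson_gen lam mu P f y =
     infsum (\<lambda>z. jackson_kernel lam mu P (\<lambda>k. int (z k) - int (y k)) * (f z - f y)) UNIV"

definition kernel_irreducible :: "(('d \<Rightarrow> int) \<Rightarrow> real) \<Rightarrow> bool" where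
  "kernel_irreducible k \<longleftrightarrow> (\<forall>y z. (y, z) \<in> {(a, b). k (b - a) > 0}\<^sup>*)"

definition norm_at_top :: "('d::finite \<Rightarrow> nat) filter" where
  "norm_at_top = filtercomap (\<lambda>x. \<Sum>i\<in>UNIV. x i) at_top"

definition h_gamma :: "('d::finite \<Rightarrow> real) \<Rightarrow> real \<Rightarrow> ('d \<Rightarrow> nat) \<Rightarrow> real" where
  "h_gamma \<gamma> q x = (\<Sum>i\<in>UNIV. (1 + \<gamma> i) ^ (x i) * (1 + q * \<gamma> i) ^ (\<Sum>j\<in>UNIV - {i}. x j))"

end

theory Submission
  imports Defs
begin

text \<open>Each summand \<open>T\<^sub>i(x) = (1+\<gamma>\<^sub>i)\<^bsup>x\<^sub>i\<^esup> (1+q\<gamma>\<^sub>i)\<^bsup>|x|-x\<^sub>i\<^esup>\<close> of \<open>h\<^sub>\<gamma>\<close> is an eigenfunction of the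
  generator off the face \<open>x\<^sub>i = 0\<close>: for the value \<open>q = p/(1-(d-2)p)\<close> the jumps initiated at the
  other queues leave \<open>T\<^sub>i\<close> invariant on average, and by the traffic equations
  \<open>\<L>T\<^sub>i = c\<^sub>i T\<^sub>i\<close> with \<open>c\<^sub>i = -C \<gamma>\<^sub>i (\<mu>\<^sub>i/(1+\<gamma>\<^sub>i) - \<nu>\<^sub>i)\<close>, \<open>C = 1-(d-1)p\<^sup>2/(1-(d-2)p)\<close>.
  On the face \<open>x\<^sub>i = 0\<close> a nonnegative correction appears, but there \<open>T\<^sub>i\<close> is exponentially small
  compared with \<open>h\<^sub>\<gamma>\<close>: the condition on the logarithms says exactly that some coordinate \<open>x\<^sub>j\<close>
  always holds a large enough share of \<open>|x|\<close> for \<open>T\<^sub>j\<close> to dominate every boundary term.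
  Hence \<open>\<L>h\<^sub>\<gamma>/h\<^sub>\<gamma>\<close> is asymptotically a convex combination of the \<open>c\<^sub>i\<close>; its limsup is
  \<open>max c\<^sub>i\<close>, attained along a coordinate axis.\<close>

definition arrival :: "'d \<Rightarrow> ('d \<Rightarrow> nat) \<Rightarrow> ('d \<Rightarrow> nat)" where
  "arrival i y = y(i := Suc (y i))"

definition departure :: "'d \<Rightarrow> ('d \<Rightarrow> nat) \<Rightarrow> ('d \<Rightarrow> nat)" where
  "departure i y = y(i := y i - 1)"

definition transfer :: "'d \<Rightarrow> 'd \<Rightarrow> ('d \<Rightarrow> nat) \<Rightarrow> ('d \<Rightarrow> nat)" where
  "transfer i j y = (y(i := y i - 1))(j := Suc (y j))"

lemma increment_eq_unit_vec_iff:
  "(\<lambda>k. int (z k) - int (y k)) = unit_vec i \<longleftrightarrow> z = arrival i y"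
proof
  assume h: "(\<lambda>k. int (z k) - int (y k)) = unit_vec i"
  show "z = arrival i y"
  proof
    fix k from fun_cong[OF h, of k] show "z k = arrival i y k"
      by (auto simp: unit_vec_def arrival_def split: if_splits)
  qed
qed (auto simp: unit_vec_def arrival_def)

lemma increment_eq_neg_unit_vec_iff:
  "(\<lambda>k. int (z k) - int (y k)) = - unit_vec i \<longleftrightarrow> 1 \<le> y i \<and> z = departure i y"
proof
  assume h: "(\<lambda>k. int (z k) - int (y k)) = - unit_vec i"
  have "z = departure i y"
  proof
    fix k from fun_cong[OF h, of k] show "z k = departure i y k"
      by (auto simp: unit_vec_def departure_def split: if_splits)
  qed
  with fun_cong[OF h, of i] show "1 \<le> y i \<and> z = departure i y"
    by (simp add: unit_vec_def)
qed (auto simp: unit_vec_def departure_def)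

lemma increment_eq_transfer_iff:
  assumes "j \<noteq> i"
  shows "(\<lambda>k. int (z k) - int (y k)) = unit_vec j - unit_vec i \<longleftrightarrow> 1 \<le> y i \<and> z = transfer i j y"
proof
  assume h: "(\<lambda>k. int (z k) - int (y k)) = unit_vec j - unit_vec i"
  have "z = transfer i j y"
  proof
    fix k from fun_cong[OF h, of k] assms show "z k = transfer i j y k"
      by (auto simp: unit_vec_def transfer_def split: if_splits)
  qed
  with fun_cong[OF h, of i] assms show "1 \<le> y i \<and> z = transfer i j y"
    by (simp add: unit_vec_def)
qed (use assms in \<open>auto simp: unit_vec_def transfer_def\<close>)

lemma has_sum_single_point: "((\<lambda>z. if z = a then f z else 0) has_sum f a) UNIV"
proof -
  have "((\<lambda>z. if z = a then f z else 0) has_sum f a) {a}"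
    by (rule has_sum_finiteI) auto
  then show ?thesis
    by (rule has_sum_cong_neutral[THEN iffD1, rotated -1]) auto
qed

lemma has_sum_sum:
  fixes g :: "'i \<Rightarrow> 'a \<Rightarrow> real"
  assumes "finite I" and "\<And>i. i \<in> I \<Longrightarrow> (g i has_sum s i) A"
  shows "((\<lambda>z. \<Sum>i\<in>I. g i z) has_sum (\<Sum>i\<in>I. s i)) A"
  using assms by (induction I rule: finite_induct) (simp_all add: has_sum_add)

definition queue_gen ::
  "('d::finite \<Rightarrow> real) \<Rightarrow> ('d \<Rightarrow> real) \<Rightarrow> ('d \<Rightarrow> 'd \<Rightarrow> real)
     \<Rightarrow> (('d \<Rightarrow> nat) \<Rightarrow> real) \<Rightarrow> ('d \<Rightarrow> nat) \<Rightarrow> 'd \<Rightarrow> real" where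
  "queue_gen lam mu P f y k = lam k * (f (arrival k y) - f y)
      + (if 1 \<le> y k then mu k * exit_prob P k * (f (departure k y) - f y) else 0)
      + (\<Sum>j\<in>UNIV. if j \<noteq> k \<and> 1 \<le> y k then mu k * P k j * (f (transfer k j y) - f y) else 0)"

lemma jackson_gen_eq_sum_queue_gen:
  "jackson_gen lam mu P f y = (\<Sum>k\<in>UNIV. queue_gen lam mu P f y k)"
proof -
  let ?D = "\<lambda>z. f z - f y"
  have summand: "jackson_kernel lam mu P (\<lambda>k. int (z k) - int (y k)) * ?D z =
     (\<Sum>k\<in>UNIV. (if z = arrival k y then lam k * ?D z else 0)
       + (if z = departure k y then (if 1 \<le> y k then mu k * exit_prob P k * ?D z else 0) else 0)
       + (\<Sum>j\<in>UNIV. if z = transfer k j y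
                     then (if j \<noteq> k \<and> 1 \<le> y k then mu k * P k j * ?D z else 0) else 0))" for z
    unfolding jackson_kernel_def sum_distrib_right distrib_right
    by (intro sum.cong refl arg_cong2[where f="(+)"])
      (auto simp: increment_eq_unit_vec_iff increment_eq_neg_unit_vec_iff increment_eq_transfer_iff)
  have "((\<lambda>z. jackson_kernel lam mu P (\<lambda>k. int (z k) - int (y k)) * ?D z)
          has_sum (\<Sum>k\<in>UNIV. queue_gen lam mu P f y k)) UNIV"
    unfolding summand queue_gen_def
    by (intro has_sum_sum has_sum_add finite has_sum_single_point)
  then show ?thesis
    unfolding jackson_gen_def by (rule infsumI)
qed

lemma queue_gen_sum:
  assumes "finite I"
  shows "queue_gen lam mu P (\<lambda>x. \<Sum>i\<in>I. g i x) y k = (\<Sum>i\<in>I. queue_gen lam mu P (g i) y k)"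
proof -
  have if_sum: "(if c then sum f I else 0) = (\<Sum>i\<in>I. if c then f i else 0)" for c and f :: "_ \<Rightarrow> real"
    by simp
  show ?thesis
    unfolding queue_gen_def sum_subtractf[symmetric] sum_distrib_left if_sum sum.distrib
    by (simp add: sum.swap[of _ I])
qed

definition h_term :: "('d::finite \<Rightarrow> real) \<Rightarrow> ('d \<Rightarrow> real) \<Rightarrow> 'd \<Rightarrow> ('d \<Rightarrow> nat) \<Rightarrow> real" where
  "h_term a b i x = a i ^ x i * b i ^ (\<Sum>j\<in>UNIV - {i}. x j)"

lemma h_gamma_eq_sum_h_term:
  "h_gamma \<gamma> q x = (\<Sum>i\<in>UNIV. h_term (\<lambda>i. 1 + \<gamma> i) (\<lambda>i. 1 + q * \<gamma> i) i x)"
  by (simp add: h_gamma_def h_term_def)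

lemma sum_fun_upd_in:
  "finite A \<Longrightarrow> k \<in> A \<Longrightarrow> sum (x(k := v)) A + x k = sum x A + (v::nat)"
  by (simp add: sum.remove[of A k] sum.cong[of "A - {k}" "A - {k}" "x(k:=v)" x])

lemma sum_fun_upd_out: "k \<notin> A \<Longrightarrow> sum (x(k := v)) A = sum x A"
  by (rule sum.cong) auto

lemma h_term_arrival_self: "h_term a b i (arrival i x) = a i * h_term a b i x"
  by (simp add: h_term_def arrival_def sum_fun_upd_out)

lemma h_term_arrival_other: "k \<noteq> i \<Longrightarrow> h_term a b i (arrival k x) = b i * h_term a b i x"
  using sum_fun_upd_in[of "UNIV - {i}" k x "Suc (x k)"]
  by (simp add: h_term_def arrival_def)

lemma h_term_departure_self:
  "1 \<le> x i \<Longrightarrow> a i * h_term a b i (departure i x) = h_term a b i x"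
  by (cases "x i") (auto simp: h_term_def departure_def sum_fun_upd_out)

lemma h_term_departure_other:
  assumes "k \<noteq> i" and "1 \<le> x k"
  shows "b i * h_term a b i (departure k x) = h_term a b i x"
proof -
  have "sum (departure k x) (UNIV - {i}) + x k = sum x (UNIV - {i}) + (x k - 1)"
    unfolding departure_def using assms by (intro sum_fun_upd_in) auto
  then have "sum x (UNIV - {i}) = Suc (sum (departure k x) (UNIV - {i}))"
    using assms by simp
  moreover have "departure k x i = x i"
    using assms by (simp add: departure_def)
  ultimately show ?thesis
    unfolding h_term_def by simp
qed

lemma h_term_transfer_from:
  "1 \<le> x i \<Longrightarrow> j \<noteq> i \<Longrightarrow> a i * h_term a b i (transfer i j x) = b i * h_term a b i x"
  using sum_fun_upd_in[of "UNIV - {i}" j "x(i := x i - 1)" "Suc (x j)"]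
    sum_fun_upd_out[of i "UNIV - {i}" x "x i - 1"]
  by (cases "x i") (auto simp: h_term_def transfer_def)

lemma h_term_transfer_to:
  assumes "k \<noteq> i" and "1 \<le> x k"
  shows "b i * h_term a b i (transfer k i x) = a i * h_term a b i x"
proof -
  have "sum (x(k := x k - 1)) (UNIV - {i}) + x k = sum x (UNIV - {i}) + (x k - 1)"
    using assms by (intro sum_fun_upd_in) auto
  moreover have "sum (transfer k i x) (UNIV - {i}) = sum (x(k := x k - 1)) (UNIV - {i})"
    unfolding transfer_def by (rule sum_fun_upd_out) simp
  ultimately have "sum x (UNIV - {i}) = Suc (sum (transfer k i x) (UNIV - {i}))"
    using assms by simp
  moreover have "transfer k i x i = Suc (x i)"
    using assms by (simp add: transfer_def)
  ultimately show ?thesis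
    unfolding h_term_def by simp
qed

lemma h_term_transfer_other:
  assumes "k \<noteq> i" "j \<noteq> i" "j \<noteq> k" "1 \<le> x k"
  shows "h_term a b i (transfer k j x) = h_term a b i x"
proof -
  have "sum (x(k := x k - 1)) (UNIV - {i}) + x k = sum x (UNIV - {i}) + (x k - 1)"
    using assms by (intro sum_fun_upd_in) auto
  moreover have "sum (transfer k j x) (UNIV - {i}) + (x(k := x k - 1)) j
      = sum (x(k := x k - 1)) (UNIV - {i}) + Suc (x j)"
    unfolding transfer_def using assms by (intro sum_fun_upd_in) auto
  ultimately have "sum (transfer k j x) (UNIV - {i}) = sum x (UNIV - {i})"
    using assms by simp
  moreover have "transfer k j x i = x i"
    using assms by (simp add: transfer_def)
  ultimately show ?thesis
    unfolding h_term_def by simp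
qed

lemma queue_gen_h_term_self:
  assumes "a i \<noteq> 0" and "P i i = 0"
  shows "queue_gen lam mu P (h_term a b i) x i = h_term a b i x *
    (lam i * (a i - 1)
     + (if 1 \<le> x i then mu i * (exit_prob P i * (1 / a i - 1) + (\<Sum>j\<in>UNIV. P i j) * (b i / a i - 1))
        else 0))"
proof (cases "1 \<le> x i")
  case True
  let ?T = "h_term a b i"
  have "?T (departure i x) = ?T x / a i"
    using h_term_departure_self[where x=x and i=i, OF True] assms(1) by (simp add: field_simps)
  moreover have "(\<Sum>j\<in>UNIV. if j \<noteq> i \<and> 1 \<le> x i then mu i * P i j * (?T (transfer i j x) - ?T x) else 0)
      = (\<Sum>j\<in>UNIV. ?T x * mu i * (b i / a i - 1) * P i j)"
  proof (rule sum.cong[OF refl])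
    fix j
    have "j \<noteq> i \<Longrightarrow> ?T (transfer i j x) = b i / a i * ?T x"
      using h_term_transfer_from[where x=x and i=i, OF True] assms(1) by (simp add: field_simps)
    then show "(if j \<noteq> i \<and> 1 \<le> x i then mu i * P i j * (?T (transfer i j x) - ?T x) else 0)
        = ?T x * mu i * (b i / a i - 1) * P i j"
      using True assms(2) by (cases "j = i") (simp_all add: algebra_simps)
  qed
  ultimately show ?thesis
    using True unfolding queue_gen_def h_term_arrival_self sum_distrib_left[symmetric]
    by (simp add: algebra_simps)
qed (simp add: queue_gen_def h_term_arrival_self algebra_simps)

lemma queue_gen_h_term_other:
  assumes "k \<noteq> i" and "b i \<noteq> 0"
  shows "queue_gen lam mu P (h_term a b i) x k = h_term a b i x *
    (lam k * (b i - 1)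
     + (if 1 \<le> x k then mu k * (exit_prob P k * (1 / b i - 1) + P k i * (a i / b i - 1)) else 0))"
proof (cases "1 \<le> x k")
  case True
  let ?T = "h_term a b i"
  have "?T (departure k x) = ?T x / b i"
    using h_term_departure_other[where x=x, OF assms(1) True] assms(2) by (simp add: field_simps)
  moreover have "(\<Sum>j\<in>UNIV. if j \<noteq> k \<and> 1 \<le> x k then mu k * P k j * (?T (transfer k j x) - ?T x) else 0)
      = (\<Sum>j\<in>UNIV. if j = i then ?T x * mu k * P k i * (a i / b i - 1) else 0)"
  proof (rule sum.cong[OF refl])
    fix j
    have "?T (transfer k i x) = a i / b i * ?T x"
      using h_term_transfer_to[where x=x, OF assms(1) True] assms(2) by (simp add: field_simps)
    then show "(if j \<noteq> k \<and> 1 \<le> x k then mu k * P k j * (?T (transfer k j x) - ?T x) else 0)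
        = (if j = i then ?T x * mu k * P k i * (a i / b i - 1) else 0)"
      using True assms(1) h_term_transfer_other[where x=x and j=j, OF assms(1) _ _ True]
      by (cases "j = i"; cases "j = k") (simp_all add: algebra_simps)
  qed
  ultimately show ?thesis
    using True assms(1) unfolding queue_gen_def h_term_arrival_other[OF assms(1)]
    by (simp add: algebra_simps)
qed (simp add: queue_gen_def h_term_arrival_other[OF assms(1)] algebra_simps)

lemma eventually_norm_at_top: "eventually P norm_at_top \<longleftrightarrow> (\<exists>N. \<forall>x. N \<le> sum x UNIV \<longrightarrow> P x)"
  by (simp add: norm_at_top_def eventually_filtercomap_at_top_linorder)

lemma eventually_norm_at_top_ge: "eventually (\<lambda>x. c \<le> real (sum x UNIV)) norm_at_top"
  unfolding eventually_norm_at_top by (rule exI[of _ "nat \<lceil>c\<rceil>"]) linarith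

lemma frequently_on_axis:
  fixes i :: "'d::finite"
  shows "frequently (\<lambda>x. \<forall>k. k \<noteq> i \<longrightarrow> x k = 0) norm_at_top"
  unfolding frequently_def eventually_norm_at_top
proof
  assume "\<exists>N. \<forall>x :: 'd \<Rightarrow> nat. N \<le> sum x UNIV \<longrightarrow> \<not> (\<forall>k. k \<noteq> i \<longrightarrow> x k = 0)"
  then obtain N where N: "\<And>x :: 'd \<Rightarrow> nat. N \<le> sum x UNIV \<Longrightarrow> \<not> (\<forall>k. k \<noteq> i \<longrightarrow> x k = 0)"
    by blast
  have "N \<le> sum (\<lambda>k. if k = i then N else 0) UNIV"
    by simp
  from N[OF this] show False
    by simp
qed

lemma Limsup_ereal_eqI:
  fixes f :: "'a \<Rightarrow> real"
  assumes upper: "\<And>\<epsilon>. 0 < \<epsilon> \<Longrightarrow> eventually (\<lambda>x. f x \<le> m + \<epsilon>) F"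
    and lower: "\<And>\<epsilon>. 0 < \<epsilon> \<Longrightarrow> frequently (\<lambda>x. m - \<epsilon> \<le> f x) F"
  shows "Limsup F (\<lambda>x. ereal (f x)) = ereal m"
proof (rule antisym)
  show "Limsup F (\<lambda>x. ereal (f x)) \<le> ereal m"
    unfolding Limsup_le_iff
  proof (intro allI impI)
    fix y assume "ereal m < y"
    then obtain r where r: "m < r" "ereal r < y"
      using ereal_dense2[OF \<open>ereal m < y\<close>] by auto
    have "eventually (\<lambda>x. f x \<le> m + (r - m) / 2) F"
      using r(1) by (intro upper) simp
    then show "eventually (\<lambda>x. ereal (f x) < y) F"
    proof eventually_elim
      case (elim x)
      with r(1) have "f x < r" by (simp add: field_simps)
      with r(2) show "ereal (f x) < y"
        using less_trans[of "ereal (f x)" "ereal r" y] by simp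
    qed
  qed
  show "ereal m \<le> Limsup F (\<lambda>x. ereal (f x))"
  proof (rule ccontr)
    assume "\<not> ?thesis"
    then have "Limsup F (\<lambda>x. ereal (f x)) < ereal m"
      by simp
    then obtain z where z: "Limsup F (\<lambda>x. ereal (f x)) < ereal z" "ereal z < ereal m"
      using ereal_dense2 by blast
    have "frequently (\<lambda>x. m - (m - z) \<le> f x \<and> ereal (f x) < ereal z) F"
      using z by (intro frequently_eventually_frequently lower Limsup_lessD) auto
    then show False
      by (auto dest: frequently_ex)
  qed
qed

lemma exists_coordinate_ge_share:
  fixes w :: "'d::finite \<Rightarrow> real" and x :: "'d \<Rightarrow> nat"
  assumes "(\<Sum>j\<in>UNIV. w j) = 1"
  obtains j where "w j * real (sum x UNIV) \<le> real (x j)"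
proof (rule ccontr)
  assume "\<not> thesis"
  with that have less: "real (x j) < w j * real (sum x UNIV)" for j
    by (meson not_le)
  have "real (sum x UNIV) = (\<Sum>j\<in>UNIV. real (x j))"
    by simp
  also have "\<dots> < (\<Sum>j\<in>UNIV. w j * real (sum x UNIV))"
    using less by (intro sum_strict_mono) auto
  also have "\<dots> = real (sum x UNIV)"
    unfolding sum_distrib_right[symmetric] assms by simp
  finally show False
    by simp
qed

lemma h_term_eq_exp:
  assumes "0 < a i" and "0 < b i"
  shows "h_term a b i x = exp (real (sum x UNIV) * ln (b i) + real (x i) * (ln (a i) - ln (b i)))"
proof -
  have pow: "c ^ n = exp (real n * ln c)" if "0 < c" for c :: real and n
    using that by (simp add: exp_of_nat_mult)
  have "real (sum x (UNIV - {i})) = real (sum x UNIV) - real (x i)"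
    by (simp add: sum.remove[of UNIV i])
  then show ?thesis
    unfolding h_term_def pow[OF assms(1)] pow[OF assms(2)] exp_add[symmetric]
    by (simp only:) (simp add: algebra_simps)
qed

lemma eventually_boundary_h_term_le:
  fixes a b :: "'d::finite \<Rightarrow> real"
  assumes b_pos: "\<And>j. 0 < b j" and b_less_a: "\<And>j. b j < a j"
    and dominance: "(\<Sum>j\<in>UNIV. (Max (range (\<lambda>i. ln (b i))) - ln (b j)) / (ln (a j) - ln (b j))) < 1"
    and "0 < \<epsilon>"
  shows "eventually (\<lambda>x. \<forall>i. x i = 0 \<longrightarrow> h_term a b i x \<le> \<epsilon> * (\<Sum>k\<in>UNIV. h_term a b k x)) norm_at_top"
proof -
  define M where "M = Max (range (\<lambda>i. ln (b i)))"
  define gap where "gap j = ln (a j) - ln (b j)" for j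
  define share where "share j = (M - ln (b j)) / gap j" for j
  define \<delta> where "\<delta> = (1 - (\<Sum>j\<in>UNIV. share j)) / real CARD('d)"
  define \<eta> where "\<eta> = Min (range gap)"
  have a_pos: "0 < a j" for j
    using b_pos[of j] b_less_a[of j] by linarith
  have gap_pos: "0 < gap j" for j
    unfolding gap_def using b_pos[of j] b_less_a[of j] by simp
  have ln_b_le_M: "ln (b j) \<le> M" for j
    unfolding M_def by (rule Max_ge) auto
  have "\<eta> \<in> range gap"
    unfolding \<eta>_def by (rule Min_in) auto
  then have \<eta>_pos: "0 < \<eta>"
    using gap_pos by auto
  have \<eta>_le: "\<eta> \<le> gap j" for j
    unfolding \<eta>_def by (rule Min_le) auto
  have \<delta>_pos: "0 < \<delta>"
    using dominance unfolding \<delta>_def share_def gap_def M_def by simp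
  have share_sum: "(\<Sum>j\<in>UNIV. share j + \<delta>) = 1"
    unfolding sum.distrib \<delta>_def by simp
  have "eventually (\<lambda>x. 1 / (\<epsilon> * \<delta> * \<eta>) \<le> real (sum x UNIV)) norm_at_top"
    by (rule eventually_norm_at_top_ge)
  then show ?thesis
  proof eventually_elim
    case (elim x)
    let ?S = "real (sum x UNIV)"
    have large: "1 \<le> \<epsilon> * exp (\<delta> * \<eta> * ?S)"
    proof -
      have "1 \<le> \<epsilon> * (\<delta> * \<eta> * ?S)"
        using elim \<open>0 < \<epsilon>\<close> \<delta>_pos \<eta>_pos by (simp add: field_simps)
      also have "\<dots> \<le> \<epsilon> * exp (\<delta> * \<eta> * ?S)"
        by (rule mult_left_mono) (use \<open>0 < \<epsilon>\<close> exp_ge_add_one_self[of "\<delta> * \<eta> * ?S"] in linarith)+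
      finally show ?thesis .
    qed
    txt \<open>Some queue \<open>j\<close> holds its share plus \<open>\<delta>\<close> of the total, so \<open>h_term a b j x\<close> exceeds
      every boundary term by the factor \<open>exp (\<delta> \<eta> |x|)\<close>.\<close>
    obtain j where j: "(share j + \<delta>) * ?S \<le> real (x j)"
      using exists_coordinate_ge_share[OF share_sum] .
    have "?S * M + \<delta> * \<eta> * ?S \<le> ?S * ln (b j) + real (x j) * gap j"
    proof -
      have "?S * M + \<delta> * \<eta> * ?S \<le> ?S * M + \<delta> * gap j * ?S"
        using \<eta>_le[of j] \<delta>_pos by (intro add_left_mono mult_right_mono mult_left_mono) (auto intro: sum_nonneg)
      also have "\<dots> = ?S * ln (b j) + (share j + \<delta>) * ?S * gap j"
        unfolding share_def using gap_pos[of j] by (simp add: field_simps)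
      also have "\<dots> \<le> ?S * ln (b j) + real (x j) * gap j"
        using j gap_pos[of j] by (simp add: mult_right_mono)
      finally show ?thesis .
    qed
    then have "exp (?S * M) * exp (\<delta> * \<eta> * ?S) \<le> h_term a b j x"
      unfolding h_term_eq_exp[OF a_pos b_pos] gap_def exp_add[symmetric] by simp
    also have "\<dots> \<le> (\<Sum>k\<in>UNIV. h_term a b k x)"
      by (rule member_le_sum) (auto simp: h_term_eq_exp[OF a_pos b_pos])
    finally have dominant: "exp (?S * M) * exp (\<delta> * \<eta> * ?S) \<le> (\<Sum>k\<in>UNIV. h_term a b k x)" .
    show ?case
    proof (intro allI impI)
      fix i assume "x i = 0"
      then have "h_term a b i x \<le> exp (?S * M)"
        using ln_b_le_M[of i] by (simp add: h_term_eq_exp[OF a_pos b_pos] mult_left_mono sum_nonneg)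
      also have "\<dots> \<le> \<epsilon> * (exp (?S * M) * exp (\<delta> * \<eta> * ?S))"
        using large by (simp add: algebra_simps)
      also have "\<dots> \<le> \<epsilon> * (\<Sum>k\<in>UNIV. h_term a b k x)"
        using dominant \<open>0 < \<epsilon>\<close> by (rule mult_left_mono[OF _ less_imp_le])
      finally show "h_term a b i x \<le> \<epsilon> * (\<Sum>k\<in>UNIV. h_term a b k x)" .
    qed
  qed
qed

locale symmetric_jackson =
  fixes lam mu \<nu> \<gamma> :: "'d::finite \<Rightarrow> real" and P :: "'d \<Rightarrow> 'd \<Rightarrow> real" and p :: real
  assumes mu_pos: "\<And>i. 0 < mu i"
    and P_nonneg: "\<And>i j. 0 \<le> P i j"
    and P_diag: "\<And>i. P i i = 0"
    and P_const: "\<And>i j. i \<noteq> j \<Longrightarrow> P i j = p"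
    and p_small: "p * (real CARD('d) - 1) < 1"
    and traffic: "\<And>j. \<nu> j = lam j + (\<Sum>i\<in>UNIV. \<nu> i * P i j)"
    and gamma_pos: "\<And>i. 0 < \<gamma> i"
    and gamma_bound: "\<And>i. \<gamma> i < mu i / \<nu> i - 1"
begin

definition D :: "real" where
  "D = 1 - (real CARD('d) - 2) * p"
definition q :: "real" where
  "q = p / D"
definition C :: "real" where
  "C = 1 - (real CARD('d) - 1) * p\<^sup>2 / D"
definition \<alpha> :: "'d \<Rightarrow> real" where
  "\<alpha> i = 1 + \<gamma> i"
definition \<beta> :: "'d \<Rightarrow> real" where
  "\<beta> i = 1 + q * \<gamma> i"
definition drift :: "'d \<Rightarrow> real" where
  "drift i = \<gamma> i * (mu i / (1 + \<gamma> i) - \<nu> i)"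
definition c :: "'d \<Rightarrow> real" where
  "c i = - C * drift i"
definition e :: "'d \<Rightarrow> real" where
  "e i = mu i * \<gamma> i * C / (1 + \<gamma> i)"
definition m :: "real" where
  "m = - C * Min (range drift)"

abbreviation "T \<equiv> h_term \<alpha> \<beta>"
abbreviation "h \<equiv> h_gamma \<gamma> q"

lemma single_queue_or_distinct:
  fixes i :: 'd
  obtains "UNIV = {i}" and "CARD('d) = 1" | k where "k \<noteq> i"
proof (cases "UNIV = {i}")
  case True
  moreover from True have "CARD('d) = 1"
    using card_1_singleton_iff by fastforce
  ultimately show ?thesis
    using that(1) by blast
qed (use that(2) in blast)

lemma card_UNIV_minus_one: "real (card (UNIV - {i :: 'd})) = real CARD('d) - 1"
  by (simp add: card_Diff_singleton of_nat_diff)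

lemma card_ge_2: "(k :: 'd) \<noteq> i \<Longrightarrow> 2 \<le> real CARD('d)"
  using card_mono[of UNIV "{k, i}"] by simp

text \<open>With a single queue \<open>P_const\<close> is vacuous and \<open>p\<close> is arbitrary, so the facts about \<open>p\<close>,
  \<open>q\<close> and \<open>D\<close> below are conditional on the existence of two distinct queues.\<close>

lemma p_nonneg: "(k :: 'd) \<noteq> i \<Longrightarrow> 0 \<le> p"
  using P_nonneg[of k i] P_const[of k i] by simp

lemma p_less_D: "p < D"
  using p_small unfolding D_def by (simp add: algebra_simps)

lemma D_pos: "(k :: 'd) \<noteq> i \<Longrightarrow> 0 < D"
  using p_nonneg p_less_D by fastforce

lemma q_mult_D: "(k :: 'd) \<noteq> i \<Longrightarrow> q * D = p"
  using D_pos unfolding q_def by fastforce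

lemma q_nonneg: "(k :: 'd) \<noteq> i \<Longrightarrow> 0 \<le> q"
  using p_nonneg D_pos unfolding q_def by fastforce

lemma q_less_one: "(k :: 'd) \<noteq> i \<Longrightarrow> q < 1"
  using p_less_D D_pos unfolding q_def by fastforce

lemma row_sum_P: "(\<Sum>j\<in>UNIV. P k j) = (real CARD('d) - 1) * p"
proof -
  have "(\<Sum>j\<in>UNIV. P k j) = (\<Sum>j\<in>UNIV - {k}. p)"
    using P_diag by (simp add: sum.remove[of UNIV k] P_const)
  then show ?thesis
    by (simp add: card_UNIV_minus_one)
qed

lemma exit_prob_eq: "exit_prob P k = 1 - (real CARD('d) - 1) * p"
  unfolding exit_prob_def row_sum_P ..

lemma C_eq: "C = 1 - (real CARD('d) - 1) * p * q"
  unfolding C_def q_def by (simp add: power2_eq_square)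

lemma C_pos: "0 < C"
proof (cases rule: single_queue_or_distinct[of undefined])
  case 1
  then show ?thesis
    unfolding C_eq by simp
next
  case (2 k)
  have "(real CARD('d) - 1) * p * q \<le> (real CARD('d) - 1) * p"
    using card_ge_2[OF 2] p_nonneg[OF 2] q_nonneg[OF 2] q_less_one[OF 2]
    by (intro mult_left_le) auto
  then show ?thesis
    unfolding C_eq using p_small by (simp add: mult.commute)
qed

lemma lam_eq: "lam j = (1 + p) * \<nu> j - p * (\<Sum>k\<in>UNIV. \<nu> k)"
proof -
  have "(\<Sum>i\<in>UNIV. \<nu> i * P i j) = (\<Sum>i\<in>UNIV - {j}. p * \<nu> i)"
    using P_diag by (simp add: sum.remove[of UNIV j] P_const mult.commute)
  also have "\<dots> = p * ((\<Sum>k\<in>UNIV. \<nu> k) - \<nu> j)"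
    by (simp add: sum_distrib_left[symmetric] sum_diff1)
  finally show ?thesis
    using traffic[of j] by (simp add: algebra_simps)
qed

lemma lam_add_q_sum_other_lam: "lam i + q * (\<Sum>k\<in>UNIV - {i}. lam k) = C * \<nu> i"
proof (cases rule: single_queue_or_distinct[of i])
  case 1
  then show ?thesis
    using lam_eq[of i] by (simp add: C_def sum.remove[of UNIV i] algebra_simps)
next
  case (2 k)
  define N where "N = (\<Sum>k\<in>UNIV. \<nu> k)"
  have sum_lam: "(\<Sum>k\<in>UNIV - {i}. lam k) = (1 + p) * (N - \<nu> i) - (real CARD('d) - 1) * p * N"
    unfolding lam_eq N_def
    by (simp add: sum_subtractf sum_distrib_left[symmetric] sum_diff1 card_UNIV_minus_one)
  have "lam i + q * (\<Sum>k\<in>UNIV - {i}. lam k) = (1 + p) * (1 - q) * \<nu> i + N * (q * D - p)"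
    unfolding sum_lam lam_eq[of i] N_def[symmetric] D_def by (simp add: algebra_simps)
  also have "\<dots> = C * \<nu> i"
  proof -
    have "(1 + p) * (1 - q) = C"
      using q_mult_D[OF 2] unfolding C_eq D_def by (simp add: algebra_simps)
    then show ?thesis
      using q_mult_D[OF 2] by simp
  qed
  finally show ?thesis .
qed

lemma nu_pos: "0 < \<nu> i"
proof (rule ccontr)
  assume "\<not> 0 < \<nu> i"
  then have "mu i / \<nu> i \<le> 0"
    using mu_pos[of i] by (simp add: divide_nonneg_nonpos)
  then show False
    using gamma_bound[of i] gamma_pos[of i] by simp
qed

lemma drift_pos: "0 < drift i"
proof -
  have "(1 + \<gamma> i) * \<nu> i < mu i"
    using gamma_bound[of i] nu_pos[of i] by (simp add: field_simps)
  then have "\<nu> i < mu i / (1 + \<gamma> i)"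
    using gamma_pos[of i] by (simp add: field_simps)
  then show ?thesis
    unfolding drift_def using gamma_pos[of i] by simp
qed

lemma e_nonneg: "0 \<le> e i"
  unfolding e_def using mu_pos[of i] gamma_pos[of i] C_pos by simp

lemma \<alpha>_pos: "0 < \<alpha> i"
  unfolding \<alpha>_def using gamma_pos[of i] by simp

lemma \<beta>_pos: "(k :: 'd) \<noteq> i \<Longrightarrow> 0 < \<beta> j"
  unfolding \<beta>_def using q_nonneg gamma_pos[of j] by (simp add: add_pos_nonneg)

lemma \<beta>_less_\<alpha>: "(k :: 'd) \<noteq> i \<Longrightarrow> \<beta> j < \<alpha> j"
  unfolding \<alpha>_def \<beta>_def using q_less_one gamma_pos[of j] by simp

lemma own_queue_rate:
  "exit_prob P i * (1 / \<alpha> i - 1) + (\<Sum>j\<in>UNIV. P i j) * (\<beta> i / \<alpha> i - 1) = - \<gamma> i * C / \<alpha> i"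
proof -
  have "exit_prob P i * (1 / \<alpha> i - 1) + (\<Sum>j\<in>UNIV. P i j) * (\<beta> i / \<alpha> i - 1)
      = ((1 - (real CARD('d) - 1) * p) * (1 - \<alpha> i) + (real CARD('d) - 1) * p * (\<beta> i - \<alpha> i)) / \<alpha> i"
    using \<alpha>_pos[of i] unfolding exit_prob_eq row_sum_P by (simp add: field_simps)
  also have "\<dots> = - \<gamma> i * C / \<alpha> i"
    unfolding \<alpha>_def \<beta>_def C_eq by (simp add: algebra_simps)
  finally show ?thesis .
qed

text \<open>The cancellation below is what dictates the choice \<open>q = p / (1 - (d - 2) p)\<close>.\<close>

lemma other_queue_rate:
  assumes "k \<noteq> i"
  shows "exit_prob P k * (1 / \<beta> i - 1) + P k i * (\<alpha> i / \<beta> i - 1) = 0"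
proof -
  have "exit_prob P k * (1 / \<beta> i - 1) + P k i * (\<alpha> i / \<beta> i - 1)
      = ((1 - (real CARD('d) - 1) * p) * (1 - \<beta> i) + p * (\<alpha> i - \<beta> i)) / \<beta> i"
    using \<beta>_pos[OF assms, of i] unfolding exit_prob_eq P_const[OF assms] by (simp add: field_simps)
  also have "\<dots> = \<gamma> i * (p - q * D) / \<beta> i"
    unfolding \<alpha>_def \<beta>_def D_def by (simp add: algebra_simps)
  finally show ?thesis
    using q_mult_D[OF assms] by simp
qed

lemma sum_queue_gen_h_term:
  "(\<Sum>k\<in>UNIV. queue_gen lam mu P (T i) x k) = T i x * (c i + (if x i = 0 then e i else 0))"
proof -
  have own: "queue_gen lam mu P (T i) x i
      = T i x * (lam i * \<gamma> i + (if 1 \<le> x i then mu i * (- \<gamma> i * C / \<alpha> i) else 0))"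
    unfolding queue_gen_h_term_self[OF \<alpha>_pos[THEN less_imp_neq, symmetric] P_diag] own_queue_rate
    by (simp add: \<alpha>_def[of i])
  have "queue_gen lam mu P (T i) x k = T i x * (lam k * (q * \<gamma> i))" if "k \<noteq> i" for k
    unfolding queue_gen_h_term_other[OF that \<beta>_pos[OF that, THEN less_imp_neq, symmetric]]
      other_queue_rate[OF that]
    by (simp add: \<beta>_def[of i])
  then have other: "(\<Sum>k\<in>UNIV - {i}. queue_gen lam mu P (T i) x k) = (\<Sum>k\<in>UNIV - {i}. T i x * (lam k * (q * \<gamma> i)))"
    by (intro sum.cong) auto
  have "(\<Sum>k\<in>UNIV. queue_gen lam mu P (T i) x k)
      = queue_gen lam mu P (T i) x i + (\<Sum>k\<in>UNIV - {i}. queue_gen lam mu P (T i) x k)"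
    by (simp add: sum.remove[of UNIV i])
  also have "\<dots> = T i x * (\<gamma> i * (lam i + q * (\<Sum>k\<in>UNIV - {i}. lam k))
                         + (if 1 \<le> x i then - mu i * \<gamma> i * C / \<alpha> i else 0))"
    unfolding own other by (simp add: sum_distrib_left sum_distrib_right algebra_simps)
  also have "\<dots> = T i x * (c i + (if x i = 0 then e i else 0))"
    unfolding lam_add_q_sum_other_lam c_def drift_def e_def \<alpha>_def by (simp add: algebra_simps)
  finally show ?thesis .
qed

lemma h_eq_sum_T: "h x = (\<Sum>i\<in>UNIV. T i x)"
proof -
  have "\<alpha> = (\<lambda>i. 1 + \<gamma> i)" and "\<beta> = (\<lambda>i. 1 + q * \<gamma> i)"
    by (simp_all add: fun_eq_iff \<alpha>_def \<beta>_def)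
  then show ?thesis
    by (simp add: h_gamma_eq_sum_h_term)
qed

lemma jackson_gen_h: "jackson_gen lam mu P h x = (\<Sum>i\<in>UNIV. T i x * (c i + (if x i = 0 then e i else 0)))"
  unfolding jackson_gen_eq_sum_queue_gen h_eq_sum_T[abs_def] queue_gen_sum[OF finite]
  by (subst sum.swap) (simp add: sum_queue_gen_h_term)

lemma T_pos: "0 < T i x"
proof (cases rule: single_queue_or_distinct[of i])
  case 1
  then show ?thesis
    unfolding h_term_def using \<alpha>_pos[of i] by simp
next
  case (2 k)
  then show ?thesis
    unfolding h_term_def using \<alpha>_pos[of i] \<beta>_pos[OF 2, of i] by simp
qed

lemma h_pos: "0 < h x"
  unfolding h_eq_sum_T by (rule sum_pos) (auto intro: T_pos)

lemma c_le_m: "c i \<le> m"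
  unfolding c_def m_def using C_pos by (intro mult_left_mono_neg Min_le) auto

lemma m_attained: obtains i where "c i = m"
proof -
  have "Min (range drift) \<in> range drift"
    by (rule Min_in) auto
  then show ?thesis
    using that unfolding c_def m_def by (metis imageE)
qed

lemma m_neg: "m < 0"
proof -
  have "Min (range drift) \<in> range drift"
    by (rule Min_in) auto
  then show ?thesis
    unfolding m_def using drift_pos C_pos by auto
qed

lemma eventually_boundary_T_le:
  assumes dominance: "(\<Sum>j\<in>UNIV. (Max (range (\<lambda>i. ln (\<beta> i))) - ln (\<beta> j)) / (ln (\<alpha> j) - ln (\<beta> j))) < 1"
    and "0 < \<delta>"
  shows "eventually (\<lambda>x. \<forall>i. x i = 0 \<longrightarrow> T i x \<le> \<delta> * h x) norm_at_top"
proof (cases rule: single_queue_or_distinct[of undefined])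
  case 1
  then have univ: "UNIV = {i}" for i :: 'd
    by (metis UNIV_I singletonD)
  have sum_eq: "sum x UNIV = x i" for x :: "'d \<Rightarrow> nat" and i
    by (subst univ[of i]) simp
  have "eventually (\<lambda>x. 1 \<le> real (sum x UNIV)) norm_at_top"
    by (rule eventually_norm_at_top_ge)
  then show ?thesis
    by (rule eventually_mono) (metis sum_eq of_nat_0 not_one_le_zero)
next
  case (2 k)
  show ?thesis
    unfolding h_eq_sum_T
    by (rule eventually_boundary_h_term_le[OF \<beta>_pos[OF 2] \<beta>_less_\<alpha>[OF 2] dominance \<open>0 < \<delta>\<close>])
qed

lemma jackson_gen_h_le:
  assumes boundary: "\<forall>i. x i = 0 \<longrightarrow> T i x \<le> \<delta> * h x" and "0 \<le> \<delta>"
  shows "jackson_gen lam mu P h x \<le> (m + \<delta> * (\<Sum>i\<in>UNIV. e i)) * h x"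
proof -
  have "jackson_gen lam mu P h x
      = (\<Sum>i\<in>UNIV. T i x * c i) + (\<Sum>i\<in>UNIV. e i * (if x i = 0 then T i x else 0))"
    unfolding jackson_gen_h sum.distrib[symmetric] by (rule sum.cong) (simp_all add: algebra_simps)
  also have "\<dots> \<le> (\<Sum>i\<in>UNIV. T i x * m) + (\<Sum>i\<in>UNIV. e i * (\<delta> * h x))"
    using boundary T_pos c_le_m e_nonneg \<open>0 \<le> \<delta>\<close> h_pos[of x]
    by (intro add_mono sum_mono mult_left_mono) (auto intro: less_imp_le)
  also have "\<dots> = (m + \<delta> * (\<Sum>i\<in>UNIV. e i)) * h x"
    unfolding sum_distrib_right[symmetric] h_eq_sum_T[of x] by (simp add: algebra_simps)
  finally show ?thesis .
qed

lemma jackson_gen_h_ge_on_axis: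
  assumes "c i0 = m" and axis: "\<forall>k. k \<noteq> i0 \<longrightarrow> x k = 0"
    and boundary: "\<forall>i. x i = 0 \<longrightarrow> T i x \<le> \<delta> * h x"
  shows "(m - \<delta> * (\<Sum>i\<in>UNIV. m - c i)) * h x \<le> jackson_gen lam mu P h x"
proof -
  have "(m - \<delta> * (\<Sum>i\<in>UNIV. m - c i)) * h x = (\<Sum>i\<in>UNIV. T i x * m - (m - c i) * (\<delta> * h x))"
    unfolding sum_subtractf sum_distrib_right[symmetric] h_eq_sum_T[of x] by (simp add: algebra_simps)
  also have "\<dots> \<le> (\<Sum>i\<in>UNIV. T i x * c i)"
  proof (rule sum_mono)
    fix i
    have "(m - c i) * T i x \<le> (m - c i) * (\<delta> * h x)"
      using assms c_le_m[of i] by (cases "i = i0") (auto intro: mult_left_mono)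
    then show "T i x * m - (m - c i) * (\<delta> * h x) \<le> T i x * c i"
      by (simp add: algebra_simps)
  qed
  also have "\<dots> \<le> jackson_gen lam mu P h x"
    unfolding jackson_gen_h using T_pos e_nonneg
    by (intro sum_mono) (simp add: distrib_left less_imp_le)
  finally show ?thesis .
qed

theorem Limsup_jackson_gen_h_ratio:
  assumes dominance: "(\<Sum>j\<in>UNIV. (Max (range (\<lambda>i. ln (\<beta> i))) - ln (\<beta> j)) / (ln (\<alpha> j) - ln (\<beta> j))) < 1"
  shows "Limsup norm_at_top (\<lambda>x. ereal (jackson_gen lam mu P h x / h x)) = ereal m"
proof (rule Limsup_ereal_eqI)
  fix \<epsilon> :: real assume "0 < \<epsilon>"
  define E where "E = (\<Sum>i\<in>UNIV. e i)"
  have "0 \<le> E"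
    unfolding E_def using e_nonneg by (simp add: sum_nonneg)
  then have \<delta>: "0 < \<epsilon> / (E + 1)" and "\<epsilon> / (E + 1) * E \<le> \<epsilon>"
    using \<open>0 < \<epsilon>\<close> by (simp_all add: field_simps)
  from eventually_boundary_T_le[OF dominance \<delta>]
  show "eventually (\<lambda>x. jackson_gen lam mu P h x / h x \<le> m + \<epsilon>) norm_at_top"
  proof eventually_elim
    case (elim x)
    have "jackson_gen lam mu P h x \<le> (m + \<epsilon> / (E + 1) * E) * h x"
      using jackson_gen_h_le[OF elim] \<delta> unfolding E_def by simp
    also have "\<dots> \<le> (m + \<epsilon>) * h x"
      using \<open>\<epsilon> / (E + 1) * E \<le> \<epsilon>\<close> h_pos[of x] by (intro mult_right_mono) auto
    finally show ?case
      using h_pos[of x] by (simp add: divide_le_eq)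
  qed
next
  fix \<epsilon> :: real assume "0 < \<epsilon>"
  obtain i0 where i0: "c i0 = m"
    using m_attained .
  define K where "K = (\<Sum>i\<in>UNIV. m - c i)"
  have "0 \<le> K"
    unfolding K_def using c_le_m by (simp add: sum_nonneg)
  then have \<delta>: "0 < \<epsilon> / (K + 1)" and "\<epsilon> / (K + 1) * K \<le> \<epsilon>"
    using \<open>0 < \<epsilon>\<close> by (simp_all add: field_simps)
  from frequently_eventually_frequently[OF frequently_on_axis eventually_boundary_T_le[OF dominance \<delta>]]
  show "frequently (\<lambda>x. m - \<epsilon> \<le> jackson_gen lam mu P h x / h x) norm_at_top"
  proof (rule frequently_elim1, elim conjE)
    fix x
    assume "\<forall>k. k \<noteq> i0 \<longrightarrow> x k = 0" and "\<forall>i. x i = 0 \<longrightarrow> T i x \<le> \<epsilon> / (K + 1) * h x"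
    from jackson_gen_h_ge_on_axis[OF i0 this]
    have "(m - \<epsilon> / (K + 1) * K) * h x \<le> jackson_gen lam mu P h x"
      unfolding K_def .
    moreover have "(m - \<epsilon>) * h x \<le> (m - \<epsilon> / (K + 1) * K) * h x"
      using \<open>\<epsilon> / (K + 1) * K \<le> \<epsilon>\<close> h_pos[of x] by (intro mult_right_mono) auto
    ultimately have "(m - \<epsilon>) * h x \<le> jackson_gen lam mu P h x"
      by (rule order_trans[rotated])
    then show "m - \<epsilon> \<le> jackson_gen lam mu P h x / h x"
      using h_pos[of x] by (simp add: le_divide_eq)
  qed
qed

end

theorem corollary3p2:
  fixes lam mu \<nu> \<gamma> :: "'d::finite \<Rightarrow> real" and P :: "'d \<Rightarrow> 'd \<Rightarrow> real" and p :: real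
  assumes lam_nonneg: "\<And>i. lam i \<ge> 0"
    and mu_pos: "\<And>i. mu i > 0"
    and P_nonneg: "\<And>i j. P i j \<ge> 0"
    and P_diag: "\<And>i. P i i = 0"
    and P_substoch: "\<And>i. (\<Sum>j\<in>UNIV. P i j) \<le> 1"
    and hypA: "kernel_irreducible (jackson_kernel lam mu P)"
    and traffic: "\<And>j. \<nu> j = lam j + (\<Sum>i\<in>UNIV. \<nu> i * P i j)"
    and hypB: "\<And>i. \<nu> i < mu i"
    and P_const: "\<And>i j. i \<noteq> j \<Longrightarrow> P i j = p"
    and p_small: "p * (real CARD('d) - 1) < 1"
    and gamma_pos: "\<And>i. 0 < \<gamma> i"
    and gamma_bound: "\<And>i. \<gamma> i < mu i / \<nu> i - 1"
    and gamma_sum: "(\<Sum>j\<in>UNIV.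
          (Max (range (\<lambda>i. ln (1 + p / (1 - (real CARD('d) - 2) * p) * \<gamma> i)))
             - ln (1 + p / (1 - (real CARD('d) - 2) * p) * \<gamma> j))
          / (ln (1 + \<gamma> j) - ln (1 + p / (1 - (real CARD('d) - 2) * p) * \<gamma> j))) < 1"
  shows "Limsup norm_at_top
           (\<lambda>x. ereal (jackson_gen lam mu P (h_gamma \<gamma> (p / (1 - (real CARD('d) - 2) * p))) x
                        / h_gamma \<gamma> (p / (1 - (real CARD('d) - 2) * p)) x))
         = ereal (- (1 - (real CARD('d) - 1) * p\<^sup>2 / (1 - (real CARD('d) - 2) * p))
                   * Min (range (\<lambda>i. \<gamma> i * (mu i / (1 + \<gamma> i) - \<nu> i))))
       \<and> - (1 - (real CARD('d) - 1) * p\<^sup>2 / (1 - (real CARD('d) - 2) * p))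
           * Min (range (\<lambda>i. \<gamma> i * (mu i / (1 + \<gamma> i) - \<nu> i))) < 0"
proof -
  interpret symmetric_jackson lam mu \<nu> \<gamma> P p
    by unfold_locales (fact mu_pos P_nonneg P_diag P_const p_small traffic gamma_pos gamma_bound)+
  have q: "p / (1 - (real CARD('d) - 2) * p) = q"
    by (simp add: q_def D_def)
  have C: "1 - (real CARD('d) - 1) * p\<^sup>2 / (1 - (real CARD('d) - 2) * p) = C"
    by (simp add: C_def D_def)
  have drift: "(\<lambda>i. \<gamma> i * (mu i / (1 + \<gamma> i) - \<nu> i)) = drift"
    by (simp add: fun_eq_iff drift_def)
  have "(\<Sum>j\<in>UNIV. (Max (range (\<lambda>i. ln (\<beta> i))) - ln (\<beta> j)) / (ln (\<alpha> j) - ln (\<beta> j))) < 1"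
    using gamma_sum unfolding q by (simp add: \<alpha>_def \<beta>_def)
  from Limsup_jackson_gen_h_ratio[OF this] m_neg
  show ?thesis
    unfolding q C drift m_def[symmetric] by (rule conjI)
qed

end
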